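(* Let $k,i\ge0$, let $g_1,g_2\in\mathcal M(k)$ with $g_1^*g_1\neq g_2^*g_2$. Then the quadratic form on $V_i$ \[ h\longmapsto Q_{A,2}(hg_1)-Q_{A,2}(hg_2) \] has polar rank at least $\max\{0,\,i-k-m+1\}$.
   Context: $q$ is an odd prime power. Fix $m\ge0$ and $c_0,\dots,c_m\in\mathbb F_q$ with $c_m\ne0$, and let $A(z)=c_0+\tfrac12\sum_{\ell=1}^m c_\ell(z^\ell+z^{-\ell})\in\mathbb F_q[z,z^{-1}]$. For a polynomial $f$, $Q_{A,2}(f)=\operatorname{CT}\,A(z)f(z)f(z^{-1})$, where $\operatorname{CT}$ denotes the constant term of a Laurent polynomial; equivalently $Q_{A,2}(f)=\sum_{j=0}^m c_j\sum_{i\ge j}f_if_{i-j}$. $\mathcal M(k)$ is the set of monic polynomials of degree $k$ in $\mathbb F_q[t]$, $V_i$ the space of polynomials of degree $\le i$, and for $g$ of degree $k$, $g^*(t)=t^kg(t^{-1})$. The polar rank of a quadratic form $Q$ is the rank of $(x,y)\mapsto Q(x+y)-Q(x)-Q(y)$. *)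

theory Defs
  imports "HOL-Computational_Algebra.Polynomial" "Jordan_Normal_Form.DL_Rank"
begin

text \<open>Q_{A,2}(f) = sum_{j=0}^m c_j sum_{i>=j} f_i f_{i-j}, where A is given by the
  coefficient sequence c_0,...,c_m (c :: nat => 'a).\<close>
definition QA2 :: "(nat \<Rightarrow> 'a::field) \<Rightarrow> nat \<Rightarrow> 'a poly \<Rightarrow> 'a" where
  "QA2 c m f = (\<Sum>j\<le>m. c j * (\<Sum>i\<in>{j..degree f}. coeff f i * coeff f (i - j)))"

definition polar :: "('b::ab_group_add \<Rightarrow> 'a::ab_group_add) \<Rightarrow> 'b \<Rightarrow> 'b \<Rightarrow> 'a" where
  "polar Q x y = Q (x + y) - Q x - Q y"

definition polar_rank_on_V :: "nat \<Rightarrow> ('a::field poly \<Rightarrow> 'a) \<Rightarrow> nat" where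
  "polar_rank_on_V i Q =
     vec_space.rank (i + 1)
       (mat (i + 1) (i + 1) (\<lambda>(a, b). polar Q (monom 1 a) (monom 1 b)))"

end

theory Submission
  imports Defs "HOL-Library.Groups_Big_Fun" "HOL-Library.Disjoint_Sets" "HOL-Library.Z2"
    "Jordan_Normal_Form.DL_Rank_Submatrix"
begin

text \<open>Let \<open>D(s)\<close> be the coefficient of \<open>z\<^sup>s\<close> in \<open>g\<^sub>1(z) g\<^sub>1(1/z) - g\<^sub>2(z) g\<^sub>2(1/z)\<close>.
  On the monomial basis of \<open>V\<^sub>i\<close>, the polar form of \<open>h \<mapsto> Q(h g\<^sub>1) - Q(h g\<^sub>2)\<close> is the
  Toeplitz matrix whose \<open>(a, b)\<close> entry is twice the coefficient of \<open>z\<^sup>a\<^sup>-\<^sup>b\<close> in \<open>A(z) D(z)\<close>.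
  Since \<open>g\<^sub>1\<close> and \<open>g\<^sub>2\<close> have the same degree \<open>k\<close>, the hypothesis
  \<open>g\<^sub>1\<^sup>* g\<^sub>1 \<noteq> g\<^sub>2\<^sup>* g\<^sub>2\<close> says exactly that the symmetric Laurent polynomial \<open>D\<close> is nonzero;
  let \<open>r \<le> k\<close> be its top degree. Then \<open>A D\<close> has top degree \<open>m + r\<close>, with top coefficient
  \<open>c\<^sub>m D(r)/2\<close> (or \<open>c\<^sub>0 D(0)\<close> if \<open>m = 0\<close>), nonzero in odd characteristic. The Toeplitz matrix
  therefore contains an upper triangular minor of size \<open>i + 1 - m - r\<close> with constant nonzero
  diagonal.\<close>

lemma two_neq_zero_if_odd_card:
  assumes "odd (card (UNIV :: 'a::{ring_1,finite} set))"
  shows "(2::'a) \<noteq> 0"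
proof
  assume two: "(2::'a) = 0"
  have "(\<Sum>x\<in>(UNIV :: 'a set). 1 :: bit) = 0"
    by (rule sum_involution_eq_0[where h = "\<lambda>x. x + 1"])
       (use two in \<open>simp_all add: add.assoc one_add_one[symmetric] del: one_add_one\<close>)
  then have "even (card (UNIV :: 'a set))"
    by (simp add: even_of_nat[where 'a = bit, symmetric])
  with assms show False by simp
qed

lemma pick_atLeast: "pick {e..} r = e + r"
proof (induction r)
  case 0
  show ?case by (simp add: Least_equality)
next
  case (Suc r)
  show ?case unfolding pick.simps Suc by (rule Least_equality) auto
qed

lemma pick_lessThan: "r < l \<Longrightarrow> pick {..<l} r = r"
proof (induction r)
  case 0
  then show ?case by (simp add: Least_equality)
next
  case (Suc r)
  then show ?case unfolding pick.simps by (intro Least_equality) auto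
qed

lemma toeplitz_rank_ge:
  fixes A :: "'a::field mat" and E :: "int \<Rightarrow> 'a"
  assumes A: "A \<in> carrier_mat n n"
    and entries: "\<And>a b. a < n \<Longrightarrow> b < n \<Longrightarrow> A $$ (a, b) = E (int a - int b)"
    and above: "\<And>d. int e < d \<Longrightarrow> E d = 0" and top: "E (int e) \<noteq> 0"
  shows "n - e \<le> vec_space.rank n A"
proof -
  define l where "l = n - e"
  define S where "S = submatrix A {e..} {..<l}"
    \<comment> \<open>rows \<open>e, \<dots>, n - 1\<close> and columns \<open>0, \<dots>, l - 1\<close>: upper triangular with diagonal \<open>E e\<close>\<close>
  have rows: "card {a. a < dim_row A \<and> a \<in> {e..}} = l"
  proof -
    have "{a. a < dim_row A \<and> a \<in> {e..}} = {e..<n}" using A by auto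
    then show ?thesis by (simp add: l_def)
  qed
  have cols: "{b. b < dim_col A \<and> b \<in> {..<l}} = {..<l}" using A l_def by auto
  have S: "S \<in> carrier_mat l l"
    unfolding S_def by (rule carrier_matI) (simp_all only: dim_submatrix rows cols card_lessThan)
  have S_entry: "S $$ (r, s) = E (int e + int r - int s)" if "r < l" "s < l" for r s
  proof -
    have "S $$ (r, s) = A $$ (pick {e..} r, pick {..<l} s)"
      unfolding S_def by (rule submatrix_index) (use that rows cols in simp_all)
    also have "\<dots> = A $$ (e + r, s)" by (simp add: pick_atLeast pick_lessThan that)
    finally show ?thesis using entries[of "e + r" s] that l_def by simp
  qed
  have "upper_triangular S"
    unfolding upper_triangular_def using S by (auto simp: S_entry above)
  then have "det S = (\<Prod>r<l. S $$ (r, r))"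
    using S by (simp add: det_upper_triangular prod_list_diag_prod atLeast0LessThan)
  also have "\<dots> = E (int e) ^ l" by (simp add: S_entry)
  finally have "det S \<noteq> 0" using top by simp
  then have "card {b. b < n \<and> b \<in> {..<l}} \<le> vec_space.rank n A"
    using vec_space.rank_gt_minor[OF A] S_def by blast
  then show ?thesis using A cols l_def by simp
qed

lemma ex_greatest_nonzero_symmetric:
  fixes D :: "int \<Rightarrow> 'a::zero"
  assumes nonzero: "D s \<noteq> 0"
    and bounded: "\<And>t. int k < \<bar>t\<bar> \<Longrightarrow> D t = 0"
    and symmetric: "\<And>t. D (- t) = D t"
  obtains r where "r \<le> k" "D (int r) \<noteq> 0" "\<And>t. int r < \<bar>t\<bar> \<Longrightarrow> D t = 0"
proof -
  have below_k: "nat \<bar>t\<bar> \<le> k" if "D t \<noteq> 0" for t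
  proof -
    have "\<not> int k < \<bar>t\<bar>" using bounded that by blast
    then show ?thesis by simp
  qed
  have "\<exists>x. D x \<noteq> 0 \<and> (\<forall>t. D t \<noteq> 0 \<longrightarrow> nat \<bar>t\<bar> \<le> nat \<bar>x\<bar>)"
    by (rule ex_has_greatest_nat[of _ s _ "Suc k"]) (use nonzero below_k in \<open>auto simp: less_Suc_eq_le\<close>)
  then obtain x where x: "D x \<noteq> 0" and greatest: "\<And>t. D t \<noteq> 0 \<Longrightarrow> nat \<bar>t\<bar> \<le> nat \<bar>x\<bar>"
    by blast
  show ?thesis
  proof
    show "nat \<bar>x\<bar> \<le> k" using x by (rule below_k)
    show "D (int (nat \<bar>x\<bar>)) \<noteq> 0" using x symmetric[of x] by (simp add: abs_if)
    show "D t = 0" if "int (nat \<bar>x\<bar>) < \<bar>t\<bar>" for t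
      using that greatest[of t] by linarith
  qed
qed

text \<open>For symmetric \<open>D\<close>, \<open>sym_convolution c m D d\<close> is twice the coefficient of \<open>z\<^sup>d\<close>
  in \<open>A(z) D(z)\<close>, where \<open>A(z) = c\<^sub>0 + (1/2) \<Sum>\<^sub>l c\<^sub>l (z\<^sup>l + z\<^sup>-\<^sup>l)\<close>.\<close>

definition sym_convolution :: "(nat \<Rightarrow> 'a) \<Rightarrow> nat \<Rightarrow> (int \<Rightarrow> 'a) \<Rightarrow> int \<Rightarrow> 'a::comm_ring_1" where
  "sym_convolution c m D d = (\<Sum>j\<le>m. c j * (D (int j - d) + D (int j + d)))"

lemma sym_convolution_eq_0:
  assumes "\<And>t. int r < \<bar>t\<bar> \<Longrightarrow> D t = 0" and "int (m + r) < d"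
  shows "sym_convolution c m D d = 0"
  unfolding sym_convolution_def using assms by (intro sum.neutral ballI) auto

lemma sym_convolution_top:
  assumes symmetric: "\<And>t. D (- t) = D t" and vanish: "\<And>t. int r < \<bar>t\<bar> \<Longrightarrow> D t = 0"
  shows "sym_convolution c m D (int (m + r)) = (if m = 0 then 2 else 1) * c m * D (int r)"
proof -
  have lower: "c j * (D (int j - int (m + r)) + D (int j + int (m + r))) = 0" if "j < m" for j
    using that vanish by simp
  have "D (int m - int (m + r)) = D (int r)"
    using symmetric[of "int r"] by simp
  moreover have "D (int m + int (m + r)) = (if m = 0 then D (int r) else 0)"
    using vanish by simp
  ultimately have "sym_convolution c m D (int (m + r))
      = (\<Sum>j<m. c j * (D (int j - int (m + r)) + D (int j + int (m + r))))
        + c m * (D (int r) + (if m = 0 then D (int r) else 0))"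
    unfolding sym_convolution_def lessThan_Suc_atMost[symmetric] by simp
  also have "\<dots> = (if m = 0 then 2 else 1) * c m * D (int r)"
    using lower by (simp add: algebra_simps mult_2)
  finally show ?thesis .
qed

definition coeff_int :: "'a::zero poly \<Rightarrow> int \<Rightarrow> 'a" where
  "coeff_int p n = (if 0 \<le> n then coeff p (nat n) else 0)"

lemma coeff_int_of_nat [simp]: "coeff_int p (int n) = coeff p n"
  by (simp add: coeff_int_def)

lemma coeff_int_nonzero: "coeff_int p n \<noteq> 0 \<Longrightarrow> 0 \<le> n \<and> n \<le> int (degree p)"
  by (auto simp: coeff_int_def split: if_splits dest: le_degree)

lemma coeff_int_add [simp]: "coeff_int (p + q) n = coeff_int p n + coeff_int q n"
  by (simp add: coeff_int_def)

lemma coeff_int_monom_mult: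
  fixes p :: "'a::comm_semiring_1 poly"
  shows "coeff_int (monom 1 a * p) n = coeff_int p (n - int a)"
  by (auto simp: coeff_int_def coeff_monom_mult nat_diff_distrib simp del: monom_eq_1_iff)

lemma Sum_any_int_eq_sum_atMost:
  assumes "\<And>u. F u \<noteq> 0 \<Longrightarrow> 0 \<le> u \<and> u \<le> int n"
  shows "Sum_any F = (\<Sum>i\<le>n. F (int i))"
proof -
  have "Sum_any F = sum F (int ` {..n})"
  proof (rule Sum_any.expand_superset)
    show "{u. F u \<noteq> 0} \<subseteq> int ` {..n}"
    proof
      fix u assume "u \<in> {u. F u \<noteq> 0}"
      then have "0 \<le> u" "u \<le> int n" using assms by auto
      then show "u \<in> int ` {..n}" by (intro image_eqI[of _ _ "nat u"]) auto
    qed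
  qed simp
  then show ?thesis by (simp add: sum.reindex)
qed

text \<open>\<open>correlation s p q\<close> is the coefficient of \<open>z\<^sup>s\<close> in \<open>p(z) q(1/z)\<close>.\<close>

definition correlation :: "int \<Rightarrow> 'a::comm_semiring_1 poly \<Rightarrow> 'a poly \<Rightarrow> 'a" where
  "correlation s p q = Sum_any (\<lambda>u. coeff_int p (u + s) * coeff_int q u)"

lemma finite_correlation_support:
  fixes p q :: "'a::comm_semiring_1 poly"
  shows "finite {u. coeff_int p (u + s) * coeff_int q u \<noteq> 0}"
proof (rule finite_subset)
  show "{u. coeff_int p (u + s) * coeff_int q u \<noteq> 0} \<subseteq> {0..int (degree q)}"
  proof
    fix u assume "u \<in> {u. coeff_int p (u + s) * coeff_int q u \<noteq> 0}"
    then have "coeff_int q u \<noteq> 0" by auto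
    then show "u \<in> {0..int (degree q)}" by (auto dest: coeff_int_nonzero)
  qed
qed simp

lemma correlation_add_left: "correlation s (p + q) r = correlation s p r + correlation s q r"
  unfolding correlation_def coeff_int_add distrib_right
  by (intro Sum_any.distrib finite_correlation_support)

lemma correlation_add_right: "correlation s r (p + q) = correlation s r p + correlation s r q"
  unfolding correlation_def coeff_int_add distrib_left
  by (intro Sum_any.distrib finite_correlation_support)

lemma correlation_swap: "correlation (- s) p q = correlation s q p"
  unfolding correlation_def
  by (rule Sum_any.reindex_cong[OF bij_plus_right[of s]]) (simp add: o_def mult.commute)

lemma correlation_monom_mult:
  "correlation s (monom 1 a * p) (monom 1 b * q) = correlation (s + int b - int a) p q"
  unfolding correlation_def coeff_int_monom_mult
  by (rule Sum_any.reindex_cong[OF bij_plus_right[of "int b"]]) (simp add: o_def algebra_simps)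

lemma correlation_eq_0:
  assumes "int (degree p) < s \<or> int (degree q) < - s"
  shows "correlation s p q = 0"
proof -
  have "coeff_int p (u + s) * coeff_int q u = 0" for u
    using assms coeff_int_nonzero[of p "u + s"] coeff_int_nonzero[of q u] by fastforce
  then show ?thesis unfolding correlation_def by simp
qed

lemma coeff_reflect_poly_mult:
  "coeff (reflect_poly p * q) n = correlation (int (degree p) - int n) p q"
proof -
  define F where "F u = coeff_int p (u + (int (degree p) - int n)) * coeff_int q u" for u
  have shift: "nat (int i + (int (degree p) - int n)) = degree p + i - n"
    if "0 \<le> int i + (int (degree p) - int n)" for i
    using that by arith
  have "coeff (q * reflect_poly p) n = (\<Sum>i\<le>n. F (int i))"
    unfolding coeff_mult F_def coeff_reflect_poly
    by (intro sum.cong) (auto simp: coeff_int_def mult.commute shift)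
  also have "\<dots> = Sum_any F"
  proof (rule Sum_any_int_eq_sum_atMost[symmetric])
    fix u assume "F u \<noteq> 0"
    then have "coeff_int p (u + (int (degree p) - int n)) \<noteq> 0" "coeff_int q u \<noteq> 0"
      by (auto simp: F_def)
    then show "0 \<le> u \<and> u \<le> int n" by (auto dest!: coeff_int_nonzero)
  qed
  finally show ?thesis by (simp add: correlation_def F_def mult.commute)
qed

lemma QA2_eq_sum_correlation: "QA2 c m f = (\<Sum>j\<le>m. c j * correlation (int j) f f)"
proof -
  have "(\<Sum>i\<in>{j..degree f}. coeff f i * coeff f (i - j)) = correlation (int j) f f" for j
  proof -
    have "correlation (int j) f f = Sum_any (\<lambda>u. coeff_int f (u - int j) * coeff_int f u)"
      using correlation_swap[of "int j" f f] by (simp add: correlation_def)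
    also have "\<dots> = (\<Sum>i\<le>degree f. coeff_int f (int i - int j) * coeff_int f (int i))"
    proof (rule Sum_any_int_eq_sum_atMost)
      fix u assume "coeff_int f (u - int j) * coeff_int f u \<noteq> 0"
      then have "coeff_int f u \<noteq> 0" by auto
      then show "0 \<le> u \<and> u \<le> int (degree f)" by (rule coeff_int_nonzero)
    qed
    also have "\<dots> = (\<Sum>i\<in>{j..degree f}. coeff f i * coeff f (i - j))"
      by (rule sum.mono_neutral_cong_right) (auto simp: coeff_int_def nat_diff_distrib)
    finally show ?thesis ..
  qed
  then show ?thesis unfolding QA2_def by simp
qed

lemma polar_diff: "polar (\<lambda>x. F x - G x) x y = polar F x y - polar G x y"
  by (simp add: polar_def algebra_simps)

lemma polar_mult_right:
  fixes g :: "'a::ring"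
  shows "polar (\<lambda>h. F (h * g)) x y = polar F (x * g) (y * g)"
  by (simp add: polar_def distrib_right)

lemma polar_QA2: "polar (QA2 c m) x y = (\<Sum>j\<le>m. c j * (correlation j x y + correlation j y x))"
  unfolding polar_def QA2_eq_sum_correlation sum_subtractf[symmetric] right_diff_distrib[symmetric]
  by (intro sum.cong) (simp_all add: correlation_add_left correlation_add_right)

lemma reflect_poly_mult_self_eqI:
  assumes "degree p = degree q" and "\<And>s. correlation s p p = correlation s q q"
  shows "reflect_poly p * p = reflect_poly q * q"
  by (intro poly_eqI) (simp add: coeff_reflect_poly_mult assms)

lemma polar_QA2_mult_diff_monom:
  "polar (\<lambda>h. QA2 c m (h * g1) - QA2 c m (h * g2)) (monom 1 a) (monom 1 b)
     = sym_convolution c m (\<lambda>s. correlation s g1 g1 - correlation s g2 g2) (int a - int b)"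
  unfolding polar_diff polar_mult_right polar_QA2 correlation_monom_mult sym_convolution_def
    sum_subtractf[symmetric]
  by (intro sum.cong) (simp_all add: algebra_simps)

lemma polar_rank_on_V_ge:
  fixes Q :: "'a::field poly \<Rightarrow> 'a"
  assumes entries: "\<And>a b. polar Q (monom 1 a) (monom 1 b) = sym_convolution c m D (int a - int b)"
    and symmetric: "\<And>t. D (- t) = D t" and vanish: "\<And>t. int r < \<bar>t\<bar> \<Longrightarrow> D t = 0"
    and "D (int r) \<noteq> 0" and "c m \<noteq> 0" and "(2::'a) \<noteq> 0"
  shows "i + 1 - (m + r) \<le> polar_rank_on_V i Q"
  unfolding polar_rank_on_V_def
proof (rule toeplitz_rank_ge)
  show "sym_convolution c m D d = 0" if "int (m + r) < d" for d
    using vanish that by (rule sym_convolution_eq_0)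
  show "sym_convolution c m D (int (m + r)) \<noteq> 0"
    using sym_convolution_top[of D, OF symmetric vanish] assms(4-6) by simp
qed (simp_all add: entries)

theorem lemma4p1:
  fixes c :: "nat \<Rightarrow> 'a::{field, finite}"
    and m k i :: nat
    and g1 g2 :: "'a poly"
  assumes "odd (card (UNIV :: 'a set))"
    and "c m \<noteq> 0"
    and "lead_coeff g1 = 1" and "degree g1 = k"
    and "lead_coeff g2 = 1" and "degree g2 = k"
    and "reflect_poly g1 * g1 \<noteq> reflect_poly g2 * g2"
  shows "polar_rank_on_V i (\<lambda>h. QA2 c m (h * g1) - QA2 c m (h * g2))
           \<ge> nat (int i - int k - int m + 1)"
proof -
  define D where "D = (\<lambda>s. correlation s g1 g1 - correlation s g2 g2)"
  have D_symmetric: "D (- s) = D s" for s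
    unfolding D_def by (simp add: correlation_swap)
  have D_bounded: "D s = 0" if "int k < \<bar>s\<bar>" for s
    unfolding D_def using that assms(4,6) by (simp add: correlation_eq_0 abs_if split: if_splits)
  obtain s where "D s \<noteq> 0"
    using reflect_poly_mult_self_eqI[of g1 g2] assms(4,6,7) unfolding D_def by force
  then obtain r where "r \<le> k" and D_top: "D (int r) \<noteq> 0"
    and D_above: "\<And>t. int r < \<bar>t\<bar> \<Longrightarrow> D t = 0"
    using ex_greatest_nonzero_symmetric[of D, OF _ D_bounded D_symmetric] by blast
  have "i + 1 - (m + r) \<le> polar_rank_on_V i (\<lambda>h. QA2 c m (h * g1) - QA2 c m (h * g2))"
    by (rule polar_rank_on_V_ge[OF polar_QA2_mult_diff_monom[of c m g1 g2, folded D_def] D_symmetric D_above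
          D_top assms(2) two_neq_zero_if_odd_card[OF assms(1)]])
  then show ?thesis using \<open>r \<le> k\<close> by linarith
qed

end
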